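(* Let $D$ be an $n\times n$ positive definite density matrix and let $A$ be an $n\times n$ self-adjoint matrix. Assume that $f,g$ are standard functions such that $$g(x)\ge c\,\frac{(x-1)^2}{f(x)}\qquad\text{for all }x>0$$ for some constant $c>0$. Then $$\mathrm{qCov}^g_D(A,A)\ \ge\ c\,\gamma^f_D\big([D,A],[D,A]\big).$$
   Context: A function $f:(0,\infty)\to(0,\infty)$ is called standard if it is operator monotone, $f(1)=1$ and $f(t)=tf(t^{-1})$ for all $t>0$. For a standard $f$ define the mean $M_f(a,b):=bf(a/b)$ for $a,b>0$. For a positive definite density matrix $D$ (i.e. $D>0$, $\mathrm{Tr}\,D=1$), let $\mathbf L_D(X)=DX$, $\mathbf R_D(X)=XD$ on $n\times n$ complex matrices and $\mathbb J^f_D:=f(\mathbf L_D\mathbf R_D^{-1})\mathbf R_D$. The quantum Fisher information is $\gamma^f_D(A,B):=\mathrm{Tr}\,A^*(\mathbb J^f_D)^{-1}(B)$ and the quantum covariance is $\mathrm{qCov}^f_D(A,B):=\mathrm{Tr}\,A^*\mathbb J^f_D(B)-(\mathrm{Tr}\,DA^* )(\mathrm{Tr}\,DB)$. Equivalently, if $D=\mathrm{Diag}(\lambda_1,\dots,\lambda_n)$ with $\lambda_i>0$, then $\gamma^f_D(A,B)=\sum_{i,j}\frac{1}{M_f(\lambda_i,\lambda_j)}\overline{A_{ij}}B_{ij}$ and $\mathrm{qCov}^f_D(A,B)=\sum_{i,j}M_f(\lambda_i,\lambda_j)\overline{A_{ij}}B_{ij}-\big(\sum_i\lambda_i\overline{A_{ii}}\big)\big(\sum_i\lambda_iB_{ii}\big)$.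 $[D,A]=DA-AD$. *)

theory Defs
  imports "Jordan_Normal_Form.Matrix" "HOL-Library.Complex_Order"
begin

definition adj :: "complex mat \<Rightarrow> complex mat" where
  "adj M = mat (dim_col M) (dim_row M) (\<lambda>(i,j). cnj (M $$ (j,i)))"

definition self_adjoint :: "complex mat \<Rightarrow> bool" where
  "self_adjoint M \<longleftrightarrow> dim_row M = dim_col M \<and> adj M = M"

definition unitary :: "nat \<Rightarrow> complex mat \<Rightarrow> bool" where
  "unitary n U \<longleftrightarrow> U \<in> carrier_mat n n \<and> adj U * U = 1\<^sub>m n"

definition qform :: "complex mat \<Rightarrow> (nat \<Rightarrow> complex) \<Rightarrow> complex" where
  "qform M v = (\<Sum>i<dim_row M. \<Sum>j<dim_row M. cnj (v i) * M $$ (i,j) * v j)"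

definition pos_semidef :: "complex mat \<Rightarrow> bool" where
  "pos_semidef M \<longleftrightarrow> self_adjoint M \<and> (\<forall>v. 0 \<le> Re (qform M v))"

definition pos_def :: "complex mat \<Rightarrow> bool" where
  "pos_def M \<longleftrightarrow> self_adjoint M \<and>
     (\<forall>v. (\<exists>i<dim_row M. v i \<noteq> 0) \<longrightarrow> 0 < Re (qform M v))"

definition diag_c :: "nat \<Rightarrow> (nat \<Rightarrow> real) \<Rightarrow> complex mat" where
  "diag_c n l = mat n n (\<lambda>(i,j). if i = j then complex_of_real (l i) else 0)"

definition spec_decomp :: "complex mat \<Rightarrow> complex mat \<times> (nat \<Rightarrow> real)" where
  "spec_decomp M = (SOME (U, l). unitary (dim_row M) U \<and> M = U * diag_c (dim_row M) l * adj U)"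

definition mat_fun :: "(real \<Rightarrow> real) \<Rightarrow> complex mat \<Rightarrow> complex mat" where
  "mat_fun f M = (case spec_decomp M of (U, l) \<Rightarrow> U * diag_c (dim_row M) (\<lambda>i. f (l i)) * adj U)"

definition operator_monotone :: "(real \<Rightarrow> real) \<Rightarrow> bool" where
  "operator_monotone f \<longleftrightarrow>
    (\<forall>n A B. A \<in> carrier_mat n n \<longrightarrow> B \<in> carrier_mat n n \<longrightarrow> pos_def A \<longrightarrow> pos_def B \<longrightarrow>
       pos_semidef (B - A) \<longrightarrow> pos_semidef (mat_fun f B - mat_fun f A))"

definition standard :: "(real \<Rightarrow> real) \<Rightarrow> bool" where
  "standard f \<longleftrightarrow> (\<forall>t>0. f t > 0) \<and> operator_monotone f \<and> f 1 = 1 \<and>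
     (\<forall>t>0. f t = t * f (1 / t))"

definition mean :: "(real \<Rightarrow> real) \<Rightarrow> real \<Rightarrow> real \<Rightarrow> real" where
  "mean f a b = b * f (a / b)"

definition density :: "complex mat \<Rightarrow> bool" where
  "density D \<longleftrightarrow> pos_def D \<and> (\<Sum>i<dim_row D. D $$ (i,i)) = 1"

definition qFisher :: "(real \<Rightarrow> real) \<Rightarrow> complex mat \<Rightarrow> complex mat \<Rightarrow> complex mat \<Rightarrow> complex" where
  "qFisher f D A B = (case spec_decomp D of (U, l) \<Rightarrow>
     let A' = adj U * A * U; B' = adj U * B * U in
     (\<Sum>i<dim_row D. \<Sum>j<dim_row D.
        complex_of_real (1 / mean f (l i) (l j)) * cnj (A' $$ (i,j)) * B' $$ (i,j)))"

definition qCov :: "(real \<Rightarrow> real) \<Rightarrow> complex mat \<Rightarrow> complex mat \<Rightarrow> complex mat \<Rightarrow> complex" where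
  "qCov f D A B = (case spec_decomp D of (U, l) \<Rightarrow>
     let A' = adj U * A * U; B' = adj U * B * U in
     (\<Sum>i<dim_row D. \<Sum>j<dim_row D.
        complex_of_real (mean f (l i) (l j)) * cnj (A' $$ (i,j)) * B' $$ (i,j))
     - (\<Sum>i<dim_row D. complex_of_real (l i) * cnj (A' $$ (i,i)))
       * (\<Sum>i<dim_row D. complex_of_real (l i) * B' $$ (i,i)))"

definition commutator :: "complex mat \<Rightarrow> complex mat \<Rightarrow> complex mat" where
  "commutator D A = D * A - A * D"

end

theory Submission
  imports Defs "Jordan_Normal_Form.Schur_Decomposition"
begin

text \<open>
  Work in an eigenbasis of \<open>D\<close>: if \<open>D = U diag(\<lambda>) U\<^sup>*\<close> and \<open>A' = U\<^sup>* A U\<close>, then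
  \<open>U\<^sup>* [D,A] U\<close> has entries \<open>(\<lambda>\<^sub>i - \<lambda>\<^sub>j) A'\<^sub>i\<^sub>j\<close>, so both sides become weighted sums of
  \<open>|A'\<^sub>i\<^sub>j|\<^sup>2\<close>. Off the diagonal the hypothesis on \<open>g\<close>, evaluated at \<open>\<lambda>\<^sub>i/\<lambda>\<^sub>j\<close>, gives
  \<open>M\<^sub>g(\<lambda>\<^sub>i,\<lambda>\<^sub>j) \<ge> c (\<lambda>\<^sub>i - \<lambda>\<^sub>j)\<^sup>2 / M\<^sub>f(\<lambda>\<^sub>i,\<lambda>\<^sub>j)\<close>; on the diagonal the left side has
  \<open>\<Sum> \<lambda>\<^sub>i A'\<^sub>i\<^sub>i\<^sup>2 - (\<Sum> \<lambda>\<^sub>i A'\<^sub>i\<^sub>i)\<^sup>2\<close>, a variance with respect to the probability vector \<open>\<lambda>\<close>,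
  while the diagonal of the right side vanishes.
  The spectral theorem needed for this is derived from the library's Schur decomposition
  \<open>A P = P B\<close> (\<open>B\<close> upper triangular) by a QR decomposition \<open>P = U T\<close>: then
  \<open>U\<^sup>* A U = T B T\<^sup>-\<^sup>1\<close> is upper triangular and self-adjoint, hence real diagonal.
\<close>

lemma adj_carrier_mat [simp]: "M \<in> carrier_mat n m \<Longrightarrow> adj M \<in> carrier_mat m n"
  by (auto simp: adj_def)

lemma dim_adj [simp]: "dim_row (adj M) = dim_col M" "dim_col (adj M) = dim_row M"
  by (auto simp: adj_def)

lemma index_adj [simp]: "i < dim_col M \<Longrightarrow> j < dim_row M \<Longrightarrow> adj M $$ (i,j) = cnj (M $$ (j,i))"
  by (auto simp: adj_def)

lemma adj_adj [simp]: "adj (adj M) = M"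
  by (rule eq_matI) auto

lemma adj_mult: "A \<in> carrier_mat n m \<Longrightarrow> B \<in> carrier_mat m k \<Longrightarrow> adj (A * B) = adj B * adj A"
  by (rule eq_matI) (auto simp: scalar_prod_def mult.commute)

lemma self_adjoint_diag_real:
  assumes "adj M = M" and "i < dim_row M" and "i < dim_col M"
  shows "M $$ (i,i) = complex_of_real (Re (M $$ (i,i)))"
proof -
  have "M $$ (i,i) = cnj (M $$ (i,i))"
    using arg_cong[OF assms(1), of "\<lambda>X. X $$ (i,i)"] assms(2,3) by simp
  then show ?thesis by (metis Reals_cnj_iff of_real_Re)
qed

lemma mult_assoc_dims:
  "dim_col (A::'a::semiring_0 mat) = dim_row B \<Longrightarrow> dim_col B = dim_row C \<Longrightarrow> A * B * C = A * (B * C)"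
  by (rule assoc_mult_mat[of A "dim_row A" "dim_col A" B "dim_col B" C "dim_col C"]) auto

lemma index_mult_mat_sum:
  "X \<in> carrier_mat n m \<Longrightarrow> Y \<in> carrier_mat m p \<Longrightarrow> i < n \<Longrightarrow> j < p \<Longrightarrow>
   (X * Y) $$ (i,j) = (\<Sum>k<m. X $$ (i,k) * Y $$ (k,j))"
  by (auto simp: scalar_prod_def lessThan_atLeast0 intro!: sum.cong)

lemma diag_c_carrier [simp]: "diag_c n l \<in> carrier_mat n n"
  by (simp add: diag_c_def)

lemma index_diag_c_mult:
  assumes X: "X \<in> carrier_mat n m" and i: "i < n" and j: "j < m"
  shows "(diag_c n l * X) $$ (i,j) = complex_of_real (l i) * X $$ (i,j)"
proof -
  have "(diag_c n l * X) $$ (i,j) = (\<Sum>k<n. if k = i then complex_of_real (l i) * X $$ (i,j) else 0)"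
    by (subst index_mult_mat_sum[OF diag_c_carrier X i j], rule sum.cong) (auto simp: diag_c_def i)
  then show ?thesis using i by simp
qed

lemma index_mult_diag_c:
  assumes X: "X \<in> carrier_mat m n" and i: "i < m" and j: "j < n"
  shows "(X * diag_c n l) $$ (i,j) = X $$ (i,j) * complex_of_real (l j)"
proof -
  have "(X * diag_c n l) $$ (i,j) = (\<Sum>k<n. if k = j then X $$ (i,j) * complex_of_real (l j) else 0)"
    by (subst index_mult_mat_sum[OF X diag_c_carrier i j], rule sum.cong) (auto simp: diag_c_def j)
  then show ?thesis using j by simp
qed

lemma unitary_mult_adj:
  assumes "unitary n U" shows "U * adj U = 1\<^sub>m n"
  using assms mat_mult_left_right_inverse[of "adj U" n U] by (auto simp: unitary_def)

lemma unitary_col_norm: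
  assumes "unitary n U" and "b < n"
  shows "(\<Sum>k<n. cnj (U $$ (k,b)) * U $$ (k,b)) = 1"
proof -
  have U: "U \<in> carrier_mat n n" and UU: "adj U * U = 1\<^sub>m n" using assms(1) by (auto simp: unitary_def)
  have "(\<Sum>k<n. cnj (U $$ (k,b)) * U $$ (k,b)) = (adj U * U) $$ (b,b)"
    by (subst index_mult_mat_sum[OF adj_carrier_mat[OF U] U assms(2,2)], rule sum.cong)
       (use U assms(2) in auto)
  then show ?thesis using UU assms(2) by simp
qed

lemma unitary_conj_self_adjoint:
  assumes U: "U \<in> carrier_mat n n" and A: "A \<in> carrier_mat n n" and "adj A = A"
  shows "adj (adj U * A * U) = adj U * A * U"
proof -
  have "adj (adj U * A * U) = adj U * adj (adj U * A)"
    by (rule adj_mult[OF mult_carrier_mat[OF adj_carrier_mat[OF U] A] U])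
  also have "\<dots> = adj U * (A * U)" using adj_mult[OF adj_carrier_mat[OF U] A] assms(3) by simp
  also have "\<dots> = adj U * A * U" using U A by (simp add: mult_assoc_dims)
  finally show ?thesis .
qed

section \<open>QR decomposition\<close>

lemma gram_schmidt_sub2_nth:
  "j < length ws \<Longrightarrow> gram_schmidt_sub2 n vs ws ! j
     = adjuster n (ws!j) (rev (take j (gram_schmidt_sub2 n vs ws)) @ vs) + ws!j"
proof (induction ws arbitrary: vs j)
  case (Cons w ws)
  then show ?case by (cases j) (simp_all add: Let_def)
qed simp

lemma adjuster_carrier_vec: "set us \<subseteq> carrier_vec n \<Longrightarrow> adjuster n w us \<in> carrier_vec n"
  by (induction us) auto

lemma adjuster_cscalar_prod_eq_0:
  fixes x w :: "complex vec"
  assumes "set us \<subseteq> carrier_vec n" and "x \<in> carrier_vec n" and "\<forall>u\<in>set us. u \<bullet>c x = 0"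
  shows "adjuster n w us \<bullet>c x = 0"
  using assms
proof (induction us)
  case (Cons u us)
  have u: "u \<in> carrier_vec n" and us: "set us \<subseteq> carrier_vec n" using Cons.prems by auto
  have cx: "conjugate x \<in> carrier_vec n" using Cons.prems by auto
  have a: "adjuster n w us \<in> carrier_vec n" by (rule adjuster_carrier_vec[OF us])
  have "adjuster n w (u#us) \<bullet>c x = (-(w \<bullet>c u)/(u \<bullet>c u) \<cdot>\<^sub>v u) \<bullet>c x + adjuster n w us \<bullet>c x"
    by (simp, rule add_scalar_prod_distrib[OF _ a cx]) (use u in auto)
  also have "\<dots> = 0" using Cons u cx a by simp
  finally show ?case .
qed simp

text \<open>
  The \<open>j\<close>-th Gram-Schmidt vector is the \<open>j\<close>-th input minus a combination of the earlier
  outputs, so the \<open>j\<close>-th column of \<open>P\<close> is orthogonal to every later output.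
\<close>
lemma gram_schmidt_cols_triangular:
  fixes P :: "complex mat"
  assumes P: "P \<in> carrier_mat n n" and det: "det P \<noteq> 0"
  defines "us \<equiv> gram_schmidt n (cols P)"
  shows "length us = n" and "set us \<subseteq> carrier_vec n" and "corthogonal us"
    and "\<And>i j. i < n \<Longrightarrow> j \<le> i \<Longrightarrow> col P j \<bullet>c us!i = (if i = j then us!i \<bullet>c us!i else 0)"
proof -
  define ws where "ws = cols P"
  have ws: "set ws \<subseteq> carrier_vec n" "length ws = n" using P unfolding ws_def by (auto simp: cols_def)
  have dist: "distinct ws"
  proof (rule ccontr)
    assume "\<not> distinct ws"
    then obtain i j where ij: "i < n" "j < n" "i \<noteq> j" "ws!i = ws!j"
      using ws(2) by (metis distinct_conv_nth)
    then have "col P i = col P j" using P unfolding ws_def by auto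
    from det_identical_columns[OF P ij(3) ij(1,2) this] det show False by simp
  qed
  interpret cof_vec_space n "TYPE(complex)" .
  have indep: "\<not> lin_dep (set ws)" using lin_dep_cols_imp_det_0[OF P] det unfolding ws_def by auto
  note gs = gram_schmidt_result[OF ws(1) dist indep us_def[folded ws_def, THEN meta_eq_to_obj_eq]]
  show len: "length us = n" and car: "set us \<subseteq> carrier_vec n" and orth: "corthogonal us"
    using gs ws(2) by simp_all
  fix i j assume i: "i < n" and j: "j \<le> i"
  have jn: "j < n" using i j by auto
  define a where "a = adjuster n (ws!j) (rev (take j us))"
  have take_car: "set (rev (take j us)) \<subseteq> carrier_vec n"
    using car set_take_subset[of j us] by auto
  have a: "a \<in> carrier_vec n" unfolding a_def by (rule adjuster_carrier_vec[OF take_car])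
  have usi: "us!i \<in> carrier_vec n" and usj: "us!j \<in> carrier_vec n" using car len i jn by auto
  have "us!j = a + ws!j"
    using gram_schmidt_sub2_nth[of j ws n "[]"] ws(2) jn
    unfolding us_def ws_def[symmetric] gram_schmidt_code a_def by simp
  then have col_eq: "col P j = us!j - a"
    using a ws jn P unfolding ws_def by auto
  have "a \<bullet>c us!i = 0" unfolding a_def
  proof (rule adjuster_cscalar_prod_eq_0[OF take_car usi], rule ballI)
    fix u assume "u \<in> set (rev (take j us))"
    then obtain k where "k < j" "u = us!k" using len jn by (auto simp: in_set_conv_nth)
    then show "u \<bullet>c us!i = 0" using corthogonalD[OF orth, of k i] i j len by auto
  qed
  then have "col P j \<bullet>c us!i = us!j \<bullet>c us!i"
    unfolding col_eq by (simp add: minus_scalar_prod_distrib[OF usj a] usi)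
  then show "col P j \<bullet>c us!i = (if i = j then us!i \<bullet>c us!i else 0)"
    using corthogonalD[OF orth, of j i] i jn len by auto
qed

lemma cscalar_prod_as_sum:
  "v \<in> carrier_vec n \<Longrightarrow> w \<in> carrier_vec n \<Longrightarrow> v \<bullet>c w = (\<Sum>m<n. v$m * cnj (w$m))"
  unfolding scalar_prod_def by (auto intro!: sum.cong simp: lessThan_atLeast0)

lemma cscalar_prod_self_pos:
  fixes v :: "complex vec"
  assumes "v \<bullet>c v \<noteq> 0"
  shows "v \<bullet>c v = complex_of_real (Re (v \<bullet>c v))" and "Re (v \<bullet>c v) > 0"
proof -
  have "v \<bullet>c v > 0" using assms conjugate_square_ge_0_vec[of v] by (simp add: order_le_less)
  then show "v \<bullet>c v = complex_of_real (Re (v \<bullet>c v))" and "Re (v \<bullet>c v) > 0"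
    by (auto simp: less_complex_def complex_eq_iff)
qed

definition mat_of_normalized_cols :: "nat \<Rightarrow> complex vec list \<Rightarrow> complex mat" where
  "mat_of_normalized_cols n us =
     mat n n (\<lambda>(k,i). us!i $ k / complex_of_real (sqrt (Re (us!i \<bullet>c us!i))))"

lemma mat_of_normalized_cols:
  fixes us :: "complex vec list"
  assumes len: "length us = n" and car: "set us \<subseteq> carrier_vec n" and orth: "corthogonal us"
  defines "U \<equiv> mat_of_normalized_cols n us"
  shows "unitary n U"
    and "\<And>P i j. P \<in> carrier_mat n n \<Longrightarrow> i < n \<Longrightarrow> j < n \<Longrightarrow>
        (adj U * P) $$ (i,j) = (col P j \<bullet>c us!i) / complex_of_real (sqrt (Re (us!i \<bullet>c us!i)))"
proof -
  define s where "s i = complex_of_real (sqrt (Re (us!i \<bullet>c us!i)))" for i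
  have U: "U \<in> carrier_mat n n" unfolding U_def mat_of_normalized_cols_def by auto
  have usc: "i < n \<Longrightarrow> us!i \<in> carrier_vec n" for i using car len by auto
  have nz: "i < n \<Longrightarrow> us!i \<bullet>c us!i \<noteq> 0" for i using corthogonalD[OF orth] len by auto
  have ss: "s i * s i = us!i \<bullet>c us!i" if i: "i < n" for i
  proof -
    note pos = cscalar_prod_self_pos[OF nz[OF i]]
    have "s i * s i = complex_of_real (Re (us!i \<bullet>c us!i))"
      unfolding s_def of_real_mult[symmetric] using pos(2) by simp
    then show ?thesis using pos(1) by simp
  qed
  have adjU: "(adj U * P) $$ (i,j) = (col P j \<bullet>c us!i) / s i"
    if P: "P \<in> carrier_mat n n" and i: "i < n" and j: "j < n" for P i j
  proof -
    have "(adj U * P) $$ (i,j) = (\<Sum>m<n. cnj (U $$ (m,i)) * P $$ (m,j))"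
      using U P i j by (subst index_mult_mat_sum[OF adj_carrier_mat[OF U] P i j]) auto
    also have "\<dots> = (\<Sum>m<n. col P j $ m * cnj (us!i $ m)) / s i"
      unfolding sum_divide_distrib U_def mat_of_normalized_cols_def s_def
      using i j P by (auto intro!: sum.cong)
    also have "\<dots> = (col P j \<bullet>c us!i) / s i"
      using cscalar_prod_as_sum[OF _ usc[OF i], of "col P j"] P by (simp add: carrier_vecI)
    finally show ?thesis .
  qed
  then show "\<And>P i j. P \<in> carrier_mat n n \<Longrightarrow> i < n \<Longrightarrow> j < n \<Longrightarrow>
        (adj U * P) $$ (i,j) = (col P j \<bullet>c us!i) / complex_of_real (sqrt (Re (us!i \<bullet>c us!i)))"
    unfolding s_def .
  have "adj U * U = 1\<^sub>m n"
  proof (rule eq_matI)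
    fix i k assume "i < dim_row (1\<^sub>m n)" and "k < dim_col (1\<^sub>m n)"
    then have i: "i < n" and k: "k < n" by auto
    have "col U k = (1 / s k) \<cdot>\<^sub>v us!k"
      using U usc[OF k] k unfolding U_def mat_of_normalized_cols_def s_def by auto
    then have "col U k \<bullet>c us!i = (us!k \<bullet>c us!i) / s k"
      using usc[OF i] usc[OF k] by simp
    then have "(adj U * U) $$ (i,k) = (us!k \<bullet>c us!i) / (s i * s k)"
      using adjU[OF U i k] by simp
    also have "\<dots> = 1\<^sub>m n $$ (i,k)"
      using ss[OF i] nz[OF i] corthogonalD[OF orth, of k i] len i k by auto
    finally show "(adj U * U) $$ (i,k) = 1\<^sub>m n $$ (i,k)" .
  qed (use U in auto)
  then show "unitary n U" unfolding unitary_def using U by auto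
qed

lemma QR_decomposition:
  fixes P :: "complex mat"
  assumes P: "P \<in> carrier_mat n n" and det: "det P \<noteq> 0"
  obtains U where "unitary n U" and "upper_triangular (adj U * P)"
    and "\<And>j. j < n \<Longrightarrow> (adj U * P) $$ (j,j) \<noteq> 0"
proof
  define us where "us = gram_schmidt n (cols P)"
  note gs = gram_schmidt_cols_triangular[OF P det, folded us_def]
  note U = mat_of_normalized_cols[OF gs(1-3)]
  let ?U = "mat_of_normalized_cols n us"
  show "unitary n ?U" by (rule U(1))
  have nz: "i < n \<Longrightarrow> us!i \<bullet>c us!i \<noteq> 0" for i using corthogonalD[OF gs(3)] gs(1) by auto
  have T: "(adj ?U * P) $$ (i,j) = (if i = j then us!i \<bullet>c us!i else 0)
                                   / complex_of_real (sqrt (Re (us!i \<bullet>c us!i)))"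
    if "i < n" "j \<le> i" for i j
    using U(2)[OF P] gs(4) that by auto
  show "upper_triangular (adj ?U * P)"
    unfolding upper_triangular_def using T P by (auto simp: mat_of_normalized_cols_def)
  show "(adj ?U * P) $$ (j,j) \<noteq> 0" if "j < n" for j
    using T[OF that order_refl] nz[OF that] cscalar_prod_self_pos(2)[OF nz[OF that]] by simp
qed

section \<open>The spectral theorem for self-adjoint matrices\<close>

lemma upper_triangular_intertwined:
  fixes H T B :: "complex mat"
  assumes H: "H \<in> carrier_mat n n" and T: "T \<in> carrier_mat n n" and B: "B \<in> carrier_mat n n"
    and uT: "upper_triangular T" and diag_T: "\<And>j. j < n \<Longrightarrow> T $$ (j,j) \<noteq> 0"
    and uB: "upper_triangular B" and eq: "H * T = T * B"
  shows "upper_triangular H"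
proof -
  have T0: "i < n \<Longrightarrow> j < i \<Longrightarrow> T $$ (i,j) = 0" for i j using uT T by (auto simp: upper_triangular_def)
  have B0: "i < n \<Longrightarrow> j < i \<Longrightarrow> B $$ (i,j) = 0" for i j using uB B by (auto simp: upper_triangular_def)
  text \<open>Column \<open>j\<close> of \<open>H T\<close> below the diagonal is \<open>H\<^sub>i\<^sub>j T\<^sub>j\<^sub>j\<close> once the earlier columns of \<open>H\<close> vanish there.\<close>
  have "\<forall>i<n. j < i \<longrightarrow> H $$ (i,j) = 0" for j
  proof (induction j rule: less_induct)
    case (less j)
    show ?case
    proof (intro allI impI)
      fix i assume i: "i < n" and ji: "j < i"
      have jn: "j < n" using i ji by auto
      have "(T * B) $$ (i,j) = (\<Sum>k<n. T $$ (i,k) * B $$ (k,j))"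
        by (rule index_mult_mat_sum[OF T B i jn])
      also have "\<dots> = 0"
      proof (rule sum.neutral, rule ballI)
        fix k assume "k \<in> {..<n}"
        then show "T $$ (i,k) * B $$ (k,j) = 0"
          using T0[OF i, of k] B0[of k j] ji by (cases "k < i") auto
      qed
      finally have TB: "(T * B) $$ (i,j) = 0" .
      have "(H * T) $$ (i,j) = (\<Sum>k<n. if k = j then H $$ (i,j) * T $$ (j,j) else 0)"
      proof (subst index_mult_mat_sum[OF H T i jn], rule sum.cong)
        fix k assume k: "k \<in> {..<n}"
        consider "k < j" | "k = j" | "j < k" by linarith
        then show "H $$ (i,k) * T $$ (k,j) = (if k = j then H $$ (i,j) * T $$ (j,j) else 0)"
          by cases (use less.IH i ji T0 k in auto)
      qed simp
      then have "H $$ (i,j) * T $$ (j,j) = 0" using TB eq jn by simp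
      then show "H $$ (i,j) = 0" using diag_T[OF jn] by simp
    qed
  qed
  then show ?thesis unfolding upper_triangular_def using H by auto
qed

lemma self_adjoint_upper_triangular_eq_diag_c:
  assumes H: "H \<in> carrier_mat n n" and "adj H = H" and "upper_triangular H"
  shows "H = diag_c n (\<lambda>i. Re (H $$ (i,i)))"
proof (rule eq_matI)
  fix i j assume "i < dim_row (diag_c n (\<lambda>i. Re (H $$ (i,i))))" "j < dim_col (diag_c n (\<lambda>i. Re (H $$ (i,i))))"
  then have i: "i < n" and j: "j < n" by (auto simp: diag_c_def)
  have lower: "H $$ (a,b) = 0" if "b < a" "a < n" for a b
    using assms(3) H that by (auto simp: upper_triangular_def)
  have "H $$ (i,j) = cnj (H $$ (j,i))" using arg_cong[OF assms(2), of "\<lambda>M. M $$ (i,j)"] H i j by simp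
  then have "i \<noteq> j \<Longrightarrow> H $$ (i,j) = 0"
    using lower[of j i] lower[of i j] i j by (cases "i < j") auto
  then show "H $$ (i,j) = diag_c n (\<lambda>i. Re (H $$ (i,i))) $$ (i,j)"
    using self_adjoint_diag_real[OF assms(2)] H i j by (auto simp: diag_c_def)
qed (use H in \<open>auto simp: diag_c_def\<close>)

theorem self_adjoint_unitarily_diagonalizable:
  fixes A :: "complex mat"
  assumes A: "A \<in> carrier_mat n n" and sa: "adj A = A"
  shows "\<exists>U l. unitary n U \<and> A = U * diag_c n l * adj U"
proof -
  obtain es where "char_poly A = (\<Prod>a\<leftarrow>es. [:- a, 1:])" using char_poly_factorized[OF A] by blast
  then obtain B P Q where "similar_mat_wit A B P Q" and uB: "upper_triangular B"
    using schur_decomposition[OF A] by (metis prod_cases3)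
  then have B: "B \<in> carrier_mat n n" and P: "P \<in> carrier_mat n n" and Q: "Q \<in> carrier_mat n n"
    and PQ: "P * Q = 1\<^sub>m n" and QP: "Q * P = 1\<^sub>m n" and AE: "A = P * B * Q"
    using similar_mat_witD2[OF A] by auto
  have "det P * det Q = 1" using det_mult[OF P Q] PQ by simp
  then have "det P \<noteq> 0" by auto
  then obtain U where uU: "unitary n U" and uT: "upper_triangular (adj U * P)"
    and diag_T: "\<And>j. j < n \<Longrightarrow> (adj U * P) $$ (j,j) \<noteq> 0"
    using QR_decomposition[OF P] by blast
  have U: "U \<in> carrier_mat n n" using uU by (simp add: unitary_def)
  note dims = carrier_matD[OF U] carrier_matD[OF adj_carrier_mat[OF U]] carrier_matD[OF A]
    carrier_matD[OF P] carrier_matD[OF Q] carrier_matD[OF B]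
  define H where "H = adj U * A * U"
  have H: "H \<in> carrier_mat n n" unfolding H_def using U A by auto
  have AP: "A * P = P * B"
  proof -
    have "A * P = P * B * (Q * P)" using AE by (simp add: mult_assoc_dims dims)
    then show ?thesis using QP P B by (simp add: mult_assoc_dims dims)
  qed
  have "H * (adj U * P) = adj U * A * (U * adj U) * P"
    unfolding H_def by (simp add: mult_assoc_dims dims)
  also have "\<dots> = adj U * (A * P)" using unitary_mult_adj[OF uU] by (simp add: mult_assoc_dims dims)
  also have "\<dots> = (adj U * P) * B" unfolding AP by (simp add: mult_assoc_dims dims)
  finally have "upper_triangular H"
    using upper_triangular_intertwined[OF H mult_carrier_mat[OF adj_carrier_mat[OF U] P] B uT diag_T uB]
    by blast
  then have Hd: "H = diag_c n (\<lambda>i. Re (H $$ (i,i)))"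
    using self_adjoint_upper_triangular_eq_diag_c[OF H] unitary_conj_self_adjoint[OF U A sa]
    unfolding H_def by blast
  have "U * H * adj U = (U * adj U) * A * (U * adj U)" unfolding H_def by (simp add: mult_assoc_dims dims)
  also have "\<dots> = A" using unitary_mult_adj[OF uU] A by simp
  finally show ?thesis using uU Hd by metis
qed

lemma spec_decomp_self_adjoint:
  assumes "self_adjoint M" and "spec_decomp M = (U, l)"
  shows "unitary (dim_row M) U" and "M = U * diag_c (dim_row M) l * adj U"
proof -
  have dim: "dim_row M = dim_col M" and sa: "adj M = M"
    using assms(1) unfolding self_adjoint_def by blast+
  have "M \<in> carrier_mat (dim_row M) (dim_row M)" using dim by (metis carrier_matI)
  then have "\<exists>p. case p of (U, l) \<Rightarrow> unitary (dim_row M) U \<and> M = U * diag_c (dim_row M) l * adj U"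
    using self_adjoint_unitarily_diagonalizable sa by blast
  then have "case spec_decomp M of (U, l) \<Rightarrow> unitary (dim_row M) U \<and> M = U * diag_c (dim_row M) l * adj U"
    unfolding spec_decomp_def by (rule someI_ex)
  then show "unitary (dim_row M) U" and "M = U * diag_c (dim_row M) l * adj U"
    using assms(2) by auto
qed

lemma unitary_diagonalization_commute:
  assumes uU: "unitary n U" and DE: "D = U * diag_c n l * adj U"
  shows "D * U = U * diag_c n l" and "adj U * D = diag_c n l * adj U"
    and "adj U * D * U = diag_c n l"
proof -
  have U: "U \<in> carrier_mat n n" and UU: "adj U * U = 1\<^sub>m n" using uU by (auto simp: unitary_def)
  note dims = carrier_matD[OF U] carrier_matD[OF adj_carrier_mat[OF U]] carrier_matD[OF diag_c_carrier]
  have "D * U = U * diag_c n l * (adj U * U)" unfolding DE by (simp add: mult_assoc_dims dims)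
  then show "D * U = U * diag_c n l"
    using UU right_mult_one_mat[OF mult_carrier_mat[OF U diag_c_carrier]] by simp
  have "adj U * D = (adj U * U) * diag_c n l * adj U" unfolding DE by (simp add: mult_assoc_dims dims)
  then show adj_D: "adj U * D = diag_c n l * adj U" using UU left_mult_one_mat[OF diag_c_carrier] by simp
  have "adj U * D * U = diag_c n l * (adj U * U)" unfolding adj_D by (simp add: mult_assoc_dims dims)
  then show "adj U * D * U = diag_c n l" using UU right_mult_one_mat[OF diag_c_carrier] by simp
qed

lemma index_unitary_conj_commutator:
  assumes uU: "unitary n U" and DE: "D = U * diag_c n l * adj U" and A: "A \<in> carrier_mat n n"
    and i: "i < n" and j: "j < n"
  shows "(adj U * commutator D A * U) $$ (i,j) = complex_of_real (l i - l j) * (adj U * A * U) $$ (i,j)"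
proof -
  have U: "U \<in> carrier_mat n n" using uU by (simp add: unitary_def)
  have D: "D \<in> carrier_mat n n" unfolding DE using U by auto
  note dims = carrier_matD[OF U] carrier_matD[OF adj_carrier_mat[OF U]] carrier_matD[OF A]
    carrier_matD[OF D] carrier_matD[OF diag_c_carrier]
  note comm = unitary_diagonalization_commute[OF uU DE]
  define A' where "A' = adj U * A * U"
  have A': "A' \<in> carrier_mat n n" unfolding A'_def using U A by auto
  have DA: "D * A \<in> carrier_mat n n" "A * D \<in> carrier_mat n n" using D A by auto
  have "adj U * commutator D A * U = (adj U * (D * A) - adj U * (A * D)) * U"
    unfolding commutator_def by (subst mult_minus_distrib_mat[OF adj_carrier_mat[OF U] DA]) simp
  also have "\<dots> = adj U * (D * A) * U - adj U * (A * D) * U"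
    using U DA by (intro minus_mult_distrib_mat[OF mult_carrier_mat mult_carrier_mat U]) auto
  also have "adj U * (D * A) * U = (adj U * D) * (A * U)" by (simp add: mult_assoc_dims dims)
  also have "\<dots> = diag_c n l * A'" unfolding comm A'_def by (simp add: mult_assoc_dims dims)
  also have "adj U * (A * D) * U = (adj U * A) * (D * U)" by (simp add: mult_assoc_dims dims)
  also have "\<dots> = A' * diag_c n l" unfolding comm A'_def by (simp add: mult_assoc_dims dims)
  finally have "(adj U * commutator D A * U) $$ (i,j)
      = complex_of_real (l i) * A' $$ (i,j) - A' $$ (i,j) * complex_of_real (l j)"
    using index_diag_c_mult[OF A' i j] index_mult_diag_c[OF A' i j] i j
    by (simp add: carrier_matD[OF A'] carrier_matD[OF diag_c_carrier])
  then show ?thesis unfolding A'_def by (simp add: algebra_simps)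
qed

lemma index_adj_mult_mult_eq_qform:
  assumes U: "U \<in> carrier_mat n n" and D: "D \<in> carrier_mat n n" and i: "i < n"
  shows "(adj U * D * U) $$ (i,i) = qform D (\<lambda>k. U $$ (k,i))"
proof -
  have "(adj U * D * U) $$ (i,i) = (\<Sum>b<n. (adj U * D) $$ (i,b) * U $$ (b,i))"
    by (rule index_mult_mat_sum[OF mult_carrier_mat[OF adj_carrier_mat[OF U] D] U i i])
  also have "\<dots> = (\<Sum>b<n. (\<Sum>a<n. cnj (U $$ (a,i)) * D $$ (a,b)) * U $$ (b,i))"
  proof (rule sum.cong[OF refl])
    fix b assume "b \<in> {..<n}"
    then have "(adj U * D) $$ (i,b) = (\<Sum>a<n. adj U $$ (i,a) * D $$ (a,b))"
      by (intro index_mult_mat_sum[OF adj_carrier_mat[OF U] D i]) simp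
    also have "\<dots> = (\<Sum>a<n. cnj (U $$ (a,i)) * D $$ (a,b))"
      using U i by (intro sum.cong) auto
    finally show "(adj U * D) $$ (i,b) * U $$ (b,i) = (\<Sum>a<n. cnj (U $$ (a,i)) * D $$ (a,b)) * U $$ (b,i)"
      by simp
  qed
  also have "\<dots> = (\<Sum>b<n. \<Sum>a<n. cnj (U $$ (a,i)) * D $$ (a,b) * U $$ (b,i))"
    by (simp add: sum_distrib_right)
  also have "\<dots> = qform D (\<lambda>k. U $$ (k,i))"
    unfolding qform_def carrier_matD[OF D] by (rule sum.swap)
  finally show ?thesis .
qed

lemma unitary_diagonalization_pos_def:
  assumes uU: "unitary n U" and DE: "D = U * diag_c n l * adj U" and pd: "pos_def D" and i: "i < n"
  shows "l i > 0"
proof -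
  have U: "U \<in> carrier_mat n n" using uU by (simp add: unitary_def)
  have D: "D \<in> carrier_mat n n" unfolding DE using U by auto
  have "complex_of_real (l i) = diag_c n l $$ (i,i)" using i by (simp add: diag_c_def)
  also have "\<dots> = (adj U * D * U) $$ (i,i)" unfolding unitary_diagonalization_commute(3)[OF uU DE] ..
  finally have "complex_of_real (l i) = (adj U * D * U) $$ (i,i)" .
  then have l_eq: "l i = Re (qform D (\<lambda>k. U $$ (k,i)))"
    using index_adj_mult_mult_eq_qform[OF U D i] by (metis Re_complex_of_real)
  have col_nz: "\<exists>k<n. U $$ (k,i) \<noteq> 0"
  proof (rule ccontr)
    assume "\<not> (\<exists>k<n. U $$ (k,i) \<noteq> 0)"
    then have "(\<Sum>k<n. cnj (U $$ (k,i)) * U $$ (k,i)) = 0" by simp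
    then show False using unitary_col_norm[OF uU i] by simp
  qed
  have pos: "(\<exists>j<dim_row D. v j \<noteq> 0) \<Longrightarrow> 0 < Re (qform D v)" for v
    using pd unfolding pos_def_def by blast
  show "l i > 0" unfolding l_eq by (rule pos) (use col_nz D in simp)
qed

lemma unitary_diagonalization_trace:
  assumes uU: "unitary n U" and DE: "D = U * diag_c n l * adj U"
  shows "(\<Sum>i<n. D $$ (i,i)) = complex_of_real (\<Sum>i<n. l i)"
proof -
  have U: "U \<in> carrier_mat n n" using uU by (simp add: unitary_def)
  have Dii: "D $$ (i,i) = (\<Sum>b<n. complex_of_real (l b) * (cnj (U $$ (i,b)) * U $$ (i,b)))"
    if i: "i < n" for i
    unfolding DE using U i
    by (subst index_mult_mat_sum[OF mult_carrier_mat[OF U diag_c_carrier] adj_carrier_mat[OF U] i i])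
       (auto intro!: sum.cong simp: index_mult_diag_c[OF U])
  have "(\<Sum>i<n. D $$ (i,i))
      = (\<Sum>i<n. \<Sum>b<n. complex_of_real (l b) * (cnj (U $$ (i,b)) * U $$ (i,b)))"
    by (simp add: Dii)
  also have "\<dots> = (\<Sum>b<n. \<Sum>i<n. complex_of_real (l b) * (cnj (U $$ (i,b)) * U $$ (i,b)))"
    by (rule sum.swap)
  also have "\<dots> = (\<Sum>b<n. complex_of_real (l b) * (\<Sum>i<n. cnj (U $$ (i,b)) * U $$ (i,b)))"
    by (simp add: sum_distrib_left)
  also have "\<dots> = complex_of_real (\<Sum>i<n. l i)" using unitary_col_norm[OF uU] by simp
  finally show ?thesis .
qed

section \<open>The scalar inequality\<close>

lemma mean_ge_of_bound:
  fixes a b c :: real and f g :: "real \<Rightarrow> real"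
  assumes "a > 0" and "b > 0" and "f (a/b) > 0"
    and "g (a/b) \<ge> c * (a/b - 1)^2 / f (a/b)"
  shows "mean g a b \<ge> c * (1 / mean f a b) * (a - b)^2"
proof -
  have "mean g a b \<ge> b * (c * (a/b - 1)^2 / f (a/b))"
    unfolding mean_def using mult_left_mono[OF assms(4), of b] assms(2) by simp
  also have "b * (c * (a/b - 1)^2 / f (a/b)) = c * (1 / mean f a b) * (a - b)^2"
    unfolding mean_def using assms(2,3) by (simp add: field_simps power2_eq_square)
  finally show ?thesis .
qed

lemma square_of_mean_le_mean_of_squares:
  fixes l r :: "nat \<Rightarrow> real"
  assumes "\<And>i. i < n \<Longrightarrow> l i \<ge> 0" and "(\<Sum>i<n. l i) = 1"
  shows "(\<Sum>i<n. l i * r i)^2 \<le> (\<Sum>i<n. l i * (r i)^2)"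
proof -
  define m where "m = (\<Sum>i<n. l i * r i)"
  have "0 \<le> (\<Sum>i<n. l i * (r i - m)^2)" using assms(1) by (intro sum_nonneg) simp
  also have "\<dots> = (\<Sum>i<n. l i * (r i)^2) - 2 * m * (\<Sum>i<n. l i * r i) + m^2 * (\<Sum>i<n. l i)"
    by (simp add: power2_eq_square algebra_simps sum.distrib sum_subtractf sum_distrib_left)
  also have "\<dots> = (\<Sum>i<n. l i * (r i)^2) - m^2"
    using assms(2) unfolding m_def by (simp add: power2_eq_square)
  finally show ?thesis unfolding m_def by simp
qed

lemma variance_sum_ge_fisher_sum:
  fixes l r :: "nat \<Rightarrow> real" and w :: "nat \<Rightarrow> nat \<Rightarrow> real" and f g :: "real \<Rightarrow> real"
  assumes lpos: "\<And>i. i < n \<Longrightarrow> l i > 0" and lsum: "(\<Sum>i<n. l i) = 1"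
    and w: "\<And>i j. w i j \<ge> 0" and w_diag: "\<And>i. i < n \<Longrightarrow> w i i = (r i)^2"
    and fpos: "\<And>t. t > 0 \<Longrightarrow> f t > 0" and g1: "g 1 = 1"
    and bound: "\<forall>x>0. g x \<ge> c * (x - 1)^2 / f x"
  shows "c * (\<Sum>i<n. \<Sum>j<n. (1 / mean f (l i) (l j)) * (l i - l j)^2 * w i j)
         \<le> (\<Sum>i<n. \<Sum>j<n. mean g (l i) (l j) * w i j) - (\<Sum>i<n. l i * r i)^2"
proof -
  have term_le: "c * ((1 / mean f (l i) (l j)) * (l i - l j)^2 * w i j) + (if i = j then l i * (r i)^2 else 0)
      \<le> mean g (l i) (l j) * w i j" if i: "i < n" and j: "j < n" for i j
  proof (cases "i = j")
    case True
    then show ?thesis using lpos[OF i] g1 w_diag[OF i] by (simp add: mean_def)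
  next
    case False
    have q: "l i / l j > 0" using lpos[OF i] lpos[OF j] by simp
    have "mean g (l i) (l j) \<ge> c * (1 / mean f (l i) (l j)) * (l i - l j)^2"
      by (rule mean_ge_of_bound[where f = f, OF lpos[OF i] lpos[OF j] fpos[OF q]]) (use bound q in auto)
    then have "c * (1 / mean f (l i) (l j)) * (l i - l j)^2 * w i j \<le> mean g (l i) (l j) * w i j"
      by (rule mult_right_mono[OF _ w])
    then show ?thesis using False by (simp add: mult.assoc)
  qed
  have "c * (\<Sum>i<n. \<Sum>j<n. (1 / mean f (l i) (l j)) * (l i - l j)^2 * w i j) + (\<Sum>i<n. l i * (r i)^2)
      = (\<Sum>i<n. \<Sum>j<n. c * ((1 / mean f (l i) (l j)) * (l i - l j)^2 * w i j)
                          + (if i = j then l i * (r i)^2 else 0))"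
    by (simp add: sum.distrib sum_distrib_left)
  also have "\<dots> \<le> (\<Sum>i<n. \<Sum>j<n. mean g (l i) (l j) * w i j)"
    by (intro sum_mono) (use term_le in auto)
  finally show ?thesis
    using square_of_mean_le_mean_of_squares[OF _ lsum, of r] lpos by (smt (verit) less_imp_le)
qed

section \<open>Covariance and Fisher information in an eigenbasis\<close>

lemma cnj_mult_self: "cnj z * z = complex_of_real ((cmod z)^2)"
  by (metis complex_norm_square mult.commute)

lemma qCov_self_eq_sum:
  assumes sp: "spec_decomp D = (U, l)" and dim: "dim_row D = n"
    and A': "adj U * A * U \<in> carrier_mat n n" and sa: "adj (adj U * A * U) = adj U * A * U"
  defines "a \<equiv> \<lambda>i j. (adj U * A * U) $$ (i,j)"
  shows "qCov g D A A = complex_of_real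
     ((\<Sum>i<n. \<Sum>j<n. mean g (l i) (l j) * (cmod (a i j))^2) - (\<Sum>i<n. l i * Re (a i i))^2)"
proof -
  have diag: "i < n \<Longrightarrow> a i i = complex_of_real (Re (a i i))" for i
    unfolding a_def using self_adjoint_diag_real[OF sa] A' by auto
  then have cnj_diag: "i < n \<Longrightarrow> cnj (a i i) = complex_of_real (Re (a i i))" for i
    by (metis complex_cnj_complex_of_real)
  have "qCov g D A A = (\<Sum>i<n. \<Sum>j<n. complex_of_real (mean g (l i) (l j)) * (cnj (a i j) * a i j))
       - (\<Sum>i<n. complex_of_real (l i) * cnj (a i i)) * (\<Sum>i<n. complex_of_real (l i) * a i i)"
    unfolding qCov_def sp dim Let_def a_def by (simp add: mult.assoc)
  also have "(\<Sum>i<n. complex_of_real (l i) * cnj (a i i)) = complex_of_real (\<Sum>i<n. l i * Re (a i i))"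
    using cnj_diag by (auto intro!: sum.cong)
  also have "(\<Sum>i<n. complex_of_real (l i) * a i i) = complex_of_real (\<Sum>i<n. l i * Re (a i i))"
    using diag by (auto intro!: sum.cong)
  finally show ?thesis by (simp add: cnj_mult_self power2_eq_square)
qed

lemma qFisher_commutator_eq_sum:
  assumes sp: "spec_decomp D = (U, l)" and dim: "dim_row D = n"
    and entries: "\<And>i j. i < n \<Longrightarrow> j < n \<Longrightarrow>
      (adj U * commutator D A * U) $$ (i,j) = complex_of_real (l i - l j) * (adj U * A * U) $$ (i,j)"
  shows "qFisher f D (commutator D A) (commutator D A) = complex_of_real
     (\<Sum>i<n. \<Sum>j<n. (1 / mean f (l i) (l j)) * (l i - l j)^2 * (cmod ((adj U * A * U) $$ (i,j)))^2)"
proof -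
  have "cnj ((adj U * commutator D A * U) $$ (i,j)) * (adj U * commutator D A * U) $$ (i,j)
        = complex_of_real ((l i - l j)^2 * (cmod ((adj U * A * U) $$ (i,j)))^2)"
    if "i < n" "j < n" for i j
  proof -
    have "cnj ((adj U * commutator D A * U) $$ (i,j)) * (adj U * commutator D A * U) $$ (i,j)
        = complex_of_real ((l i - l j)^2) * (cnj ((adj U * A * U) $$ (i,j)) * (adj U * A * U) $$ (i,j))"
      unfolding entries[OF that] by (simp add: power2_eq_square algebra_simps)
    then show ?thesis by (simp add: cnj_mult_self)
  qed
  then show ?thesis
    unfolding qFisher_def sp dim Let_def by (auto simp: mult.assoc intro!: sum.cong)
qed

lemma spec_decomp_density:
  assumes D: "D \<in> carrier_mat n n" and "density D" and sp: "spec_decomp D = (U, l)"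
  shows "unitary n U" and "D = U * diag_c n l * adj U"
    and "\<And>i. i < n \<Longrightarrow> l i > 0" and "(\<Sum>i<n. l i) = 1"
proof -
  have dim: "dim_row D = n" using D by simp
  have pd: "pos_def D" and trace: "(\<Sum>i<n. D $$ (i,i)) = 1"
    using assms(2) dim by (auto simp: density_def)
  show uU: "unitary n U" and DE: "D = U * diag_c n l * adj U"
    using spec_decomp_self_adjoint[OF _ sp] pd dim by (auto simp: pos_def_def)
  show "\<And>i. i < n \<Longrightarrow> l i > 0" by (rule unitary_diagonalization_pos_def[OF uU DE pd])
  show "(\<Sum>i<n. l i) = 1"
    using unitary_diagonalization_trace[OF uU DE] trace by (metis of_real_eq_1_iff)
qed

lemma complex_of_real_mono: "x \<le> y \<Longrightarrow> complex_of_real x \<le> complex_of_real y"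
  by (simp add: less_eq_complex_def)

theorem theorem1:
  fixes n :: nat and D A :: "complex mat" and f g :: "real \<Rightarrow> real" and c :: real
  assumes "D \<in> carrier_mat n n" and "density D"
    and "A \<in> carrier_mat n n" and "self_adjoint A"
    and "standard f" and "standard g"
    and "c > 0" and "\<forall>x>0. g x \<ge> c * (x - 1)^2 / f x"
  shows "qCov g D A A \<ge> complex_of_real c * qFisher f D (commutator D A) (commutator D A)"
proof -
  obtain U l where sp: "spec_decomp D = (U, l)" by (cases "spec_decomp D")
  note eigen = spec_decomp_density[OF assms(1,2) sp]
  have dim: "dim_row D = n" using assms(1) by simp
  have U: "U \<in> carrier_mat n n" using eigen(1) by (simp add: unitary_def)
  have fpos: "t > 0 \<Longrightarrow> f t > 0" for t using assms(5) unfolding standard_def by blast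
  have g1: "g 1 = 1" using assms(6) unfolding standard_def by blast
  define a where "a i j = (adj U * A * U) $$ (i,j)" for i j
  have A': "adj U * A * U \<in> carrier_mat n n" using U assms(3) by auto
  have sa: "adj (adj U * A * U) = adj U * A * U"
    using unitary_conj_self_adjoint[OF U assms(3)] assms(4) by (simp add: self_adjoint_def)
  have "(cmod (a i i))^2 = (Re (a i i))^2" if "i < n" for i
    using self_adjoint_diag_real[OF sa] A' that unfolding a_def by (metis carrier_matD norm_of_real power2_abs)
  then have ineq: "c * (\<Sum>i<n. \<Sum>j<n. (1 / mean f (l i) (l j)) * (l i - l j)^2 * (cmod (a i j))^2)
        \<le> (\<Sum>i<n. \<Sum>j<n. mean g (l i) (l j) * (cmod (a i j))^2) - (\<Sum>i<n. l i * Re (a i i))^2"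
    by (intro variance_sum_ge_fisher_sum[where w = "\<lambda>i j. (cmod (a i j))^2" and r = "\<lambda>i. Re (a i i)",
          OF eigen(3,4) _ _ fpos g1 assms(8)]) simp_all
  have qFisher_eq: "qFisher f D (commutator D A) (commutator D A) = complex_of_real
      (\<Sum>i<n. \<Sum>j<n. (1 / mean f (l i) (l j)) * (l i - l j)^2 * (cmod (a i j))^2)"
    unfolding a_def
    by (rule qFisher_commutator_eq_sum[OF sp dim index_unitary_conj_commutator[OF eigen(1,2) assms(3)]])
  have qCov_eq: "qCov g D A A = complex_of_real
      ((\<Sum>i<n. \<Sum>j<n. mean g (l i) (l j) * (cmod (a i j))^2) - (\<Sum>i<n. l i * Re (a i i))^2)"
    unfolding a_def by (rule qCov_self_eq_sum[OF sp dim A' sa])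
  show ?thesis
    unfolding qFisher_eq qCov_eq of_real_mult[symmetric] by (rule complex_of_real_mono[OF ineq])
qed

end
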